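(* For every integer $k\ge1$, every $d\in\mathbb N$ and every $j\in\{1,2,3,4\}$, $$G_j(k,d)=\Big(\frac{\sqrt2}{3}\Big)^k\Big(\frac1{\sqrt2}\Big)^d\frac1{k!}\,\partial_x^k\big[g_j(x)\,z_-(\mu(x))^d\big]_{x=0}.$$
   Context: Let $\mathcal B$ be the $2$-regular Bethe lattice: the infinite tree in which every node has exactly $3$ neighbours, viewed as a metric graph with each edge isometric to $]0,1[$; $\mathrm{dist}$ is the path-length distance, $m(B)$ the midpoint of edge $B$. Each edge has two orientations; $-\vec B$ is the opposite of $\vec B$; write $\vec A\to\vec B$ when the terminal node of $\vec A$ is the initial node of $\vec B$. Define the matrix $G(1)$ indexed by oriented edges by $G(1,\vec B,\vec A)=-1/3$ if $\vec B=-\vec A$, $2/3$ if $\vec A\to\vec B$ and $\vec B\ne-\vec A$, $0$ otherwise, and $G(k)=G(1)^k$; $G(k,\vec B,\vec A)$ is the coefficient, at integer time $k$, of the Dirac mass propagating along $\vec B$ in the solution of the wave equation on $\mathcal B$ (speed $1$, Kirchhoff conditions at nodes) whose initial datum is a unit Dirac mass at $m(A)$ propagating along $\vec A$. Types of a pair $(\vec A,\vec B)$ with $d=\mathrm{dist}(m(A),m(B))\ge1$: say $\vec A$ points toward $B$ if the terminal node of $\vec A$ lies on the geodesic from $m(A)$ to $m(B)$, and $\vec B$ points away from $A$ if the initial node of $\vec B$ lies on that geodesic. Type 1: $\vec A$ toward $B$, $\vec B$ away from $A$; type 2: $\vec A$ toward $B$, $\vec B$ toward $A$; type 3: $\vec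 A$ away from $B$, $\vec B$ toward $A$; type 4: $\vec A$ away from $B$, $\vec B$ away from $A$. For $d=0$, types 1 and 3 mean $\vec B=\vec A$ and types 2 and 4 mean $\vec B=-\vec A$. $G_j(k,d)$ denotes $G(k,\vec B,\vec A)$ for any pair of type $j$ at distance $d$ (it depends only on $j,k,d$). Let $r=\sqrt2/3$, $\mu(x)=2x/(1+x^2/r^2)$, $z_-(\mu)=\frac1{2\mu}(1-\sqrt{1-4\mu^2})$ (principal branch, $z_-(0)=0$). With $z=z_-(\mu(x))$ and $D(x)=(1-\frac52xz)^2-\frac{x^2}2z^4$: $g_1=\frac{z}{2x}\frac{(1-2xz)(1-\frac52xz+\frac{x^2}2z^2)}{D}$ (extended by continuity at $0$), $g_2=-\frac{z}{2\sqrt2}\frac{1-\frac52xz+\frac{x^2}2z^2}{D}$, $g_3=\frac{xz}4\frac{1-\frac52xz+z^2}{D}$, $g_4=-\frac{z}{2\sqrt2}\frac{(1-2xz)(1-\frac52xz+z^2)}{D}$, all holomorphic near $x=0$. *)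

theory Defs
  imports "HOL-Analysis.Analysis"
begin

text \<open>Nodes: reduced words over the alphabet {0,1,2} (no two consecutive letters equal),
  i.e. elements of the free product Z2*Z2*Z2; two nodes are adjacent iff one is obtained
  from the other by prepending one letter.  This is the 3-regular tree.\<close>

definition bnodes :: "nat list set" where
  "bnodes = {w. set w \<subseteq> {0,1,2} \<and> successively (\<noteq>) w}"

definition badj :: "nat list \<Rightarrow> nat list \<Rightarrow> bool" where
  "badj u v \<longleftrightarrow> u \<in> bnodes \<and> v \<in> bnodes \<and> (\<exists>i. v = i # u \<or> u = i # v)"

definition oedges :: "(nat list \<times> nat list) set" where
  "oedges = {(u,v). badj u v}"

definition orev :: "nat list \<times> nat list \<Rightarrow> nat list \<times> nat list" where
  "orev A = (snd A, fst A)"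

definition follows :: "nat list \<times> nat list \<Rightarrow> nat list \<times> nat list \<Rightarrow> bool" (infix "\<leadsto>" 50) where
  "A \<leadsto> B \<longleftrightarrow> snd A = fst B"

definition ndist :: "nat list \<Rightarrow> nat list \<Rightarrow> nat" where
  "ndist u v = (LEAST n. (u, v) \<in> ({(a,b). badj a b} ^^ n))"

text \<open>Metric-graph distance from a node x to the midpoint of the edge A, minus 1/2.\<close>
definition edist :: "nat list \<Rightarrow> nat list \<times> nat list \<Rightarrow> nat" where
  "edist x A = min (ndist x (fst A)) (ndist x (snd A))"

definition same_edge :: "nat list \<times> nat list \<Rightarrow> nat list \<times> nat list \<Rightarrow> bool" where
  "same_edge A B \<longleftrightarrow> {fst A, snd A} = {fst B, snd B}"

text \<open>dist(m(A), m(B)) in the metric graph (an integer).\<close>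
definition middist :: "nat list \<times> nat list \<Rightarrow> nat list \<times> nat list \<Rightarrow> nat" where
  "middist A B = (if same_edge A B then 0 else 1 + min (edist (fst A) B) (edist (snd A) B))"

text \<open>The node x lies on the geodesic from m(A) to m(B):
  dist(m(A),x) + dist(x,m(B)) = dist(m(A),m(B)), where dist(m(A),x) = 1/2 + edist x A.\<close>
definition on_geod :: "nat list \<Rightarrow> nat list \<times> nat list \<Rightarrow> nat list \<times> nat list \<Rightarrow> bool" where
  "on_geod x A B \<longleftrightarrow> real (edist x A) + 1/2 + (real (edist x B) + 1/2) = real (middist A B)"

definition pair_type :: "nat \<Rightarrow> nat list \<times> nat list \<Rightarrow> nat list \<times> nat list \<Rightarrow> bool" where
  "pair_type j A B \<longleftrightarrow>
    (if middist A B = 0 then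
       ((j = 1 \<or> j = 3) \<and> B = A) \<or> ((j = 2 \<or> j = 4) \<and> B = orev A)
     else
       (j = 1 \<and> on_geod (snd A) A B \<and> on_geod (fst B) A B) \<or>
       (j = 2 \<and> on_geod (snd A) A B \<and> on_geod (snd B) A B) \<or>
       (j = 3 \<and> on_geod (fst A) A B \<and> on_geod (snd B) A B) \<or>
       (j = 4 \<and> on_geod (fst A) A B \<and> on_geod (fst B) A B))"

definition G1 :: "nat list \<times> nat list \<Rightarrow> nat list \<times> nat list \<Rightarrow> real" where
  "G1 B A = (if B = orev A then -1/3 else if A \<leadsto> B then 2/3 else 0)"

fun Gk :: "nat \<Rightarrow> nat list \<times> nat list \<Rightarrow> nat list \<times> nat list \<Rightarrow> real" where
  "Gk 0 B A = (if B = A then 1 else 0)"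
| "Gk (Suc k) B A = (\<Sum>\<^sub>\<infinity>C\<in>oedges. G1 B C * Gk k C A)"

definition rr :: real where "rr = sqrt 2 / 3"

definition mu :: "complex \<Rightarrow> complex" where
  "mu x = 2 * x / (1 + x^2 / (complex_of_real rr)^2)"

definition zminus :: "complex \<Rightarrow> complex" where
  "zminus m = (if m = 0 then 0 else (1 - csqrt (1 - 4 * m^2)) / (2 * m))"

definition Zf :: "complex \<Rightarrow> complex" where
  "Zf x = zminus (mu x)"

definition Dd :: "complex \<Rightarrow> complex" where
  "Dd x = (1 - 5/2 * x * Zf x)^2 - x^2 / 2 * (Zf x)^4"

definition g1raw :: "complex \<Rightarrow> complex" where
  "g1raw x = Zf x / (2 * x) * ((1 - 2 * x * Zf x) * (1 - 5/2 * x * Zf x + x^2/2 * (Zf x)^2)) / Dd x"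

definition g1 :: "complex \<Rightarrow> complex" where
  "g1 x = (if x = 0 then Lim (at 0) g1raw else g1raw x)"

definition g2 :: "complex \<Rightarrow> complex" where
  "g2 x = - (Zf x / (2 * complex_of_real (sqrt 2))) * (1 - 5/2 * x * Zf x + x^2/2 * (Zf x)^2) / Dd x"

definition g3 :: "complex \<Rightarrow> complex" where
  "g3 x = x * Zf x / 4 * (1 - 5/2 * x * Zf x + (Zf x)^2) / Dd x"

definition g4 :: "complex \<Rightarrow> complex" where
  "g4 x = - (Zf x / (2 * complex_of_real (sqrt 2))) * ((1 - 2 * x * Zf x) * (1 - 5/2 * x * Zf x + (Zf x)^2)) / Dd x"

definition gfun :: "nat \<Rightarrow> complex \<Rightarrow> complex" where
  "gfun j = (if j = 1 then g1 else if j = 2 then g2 else if j = 3 then g3 else g4)"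

end

theory Submission
  imports Defs "HOL-Complex_Analysis.Complex_Analysis"
begin

text \<open>A unit mass on \<open>B\<close> at time \<open>k + 1\<close> is fed with weight \<open>-1/3\<close> by \<open>-B\<close> and with weight
  \<open>2/3\<close> by each of the two other edges entering the initial node of \<open>B\<close>.  Describing a pair of
  edges by its nearest endpoints shows that these edges stand in a position of the same kind as
  \<open>(A, B)\<close>, with distance changed by at most one; so \<open>G(k, B, A)\<close> depends only on the type and
  distance, and the \<open>G_j(k, d)\<close> satisfy a closed system of linear recurrences in \<open>k\<close>.
  From the quadratic equation \<open>z = \<mu> (1 + z\<^sup>2)\<close> for \<open>z = z_-(\<mu>(x))\<close> one checks that the
  \<open>g_j z\<^sup>d\<close> satisfy the same system as functional equations \<open>c F = a + x (\<alpha> F' + \<beta> F'')\<close>,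
  so their Taylor coefficients obey the recurrences; induction on \<open>k\<close> concludes.\<close>

section \<open>Distance in the tree\<close>

fun lcp_len :: "'a list \<Rightarrow> 'a list \<Rightarrow> nat" where
  "lcp_len (x # xs) (y # ys) = (if x = y then Suc (lcp_len xs ys) else 0)"
| "lcp_len _ _ = 0"

lemma lcp_len_le1: "lcp_len xs ys \<le> length xs"
  by (induction xs ys rule: lcp_len.induct) auto

lemma lcp_len_le2: "lcp_len xs ys \<le> length ys"
  by (induction xs ys rule: lcp_len.induct) auto

lemma lcp_len_commute: "lcp_len xs ys = lcp_len ys xs"
  by (induction xs ys rule: lcp_len.induct) (auto elim: lcp_len.elims)

lemma lcp_len_self [simp]: "lcp_len xs xs = length xs"
  by (induction xs) auto

lemma lcp_len_eq_length_imp_eq: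
  "lcp_len xs ys = length xs \<Longrightarrow> length xs = length ys \<Longrightarrow> xs = ys"
  by (induction xs ys rule: lcp_len.induct) (auto split: if_splits)

lemma lcp_len_eq_length_nth:
  "lcp_len xs ys = length xs \<Longrightarrow> n < length xs \<Longrightarrow> ys ! n = xs ! n"
proof (induction xs ys arbitrary: n rule: lcp_len.induct)
  case (1 x xs y ys)
  then show ?case by (cases n) (auto split: if_splits)
qed auto

lemma lcp_len_snoc:
  "lcp_len (xs @ [i]) ys =
    (if lcp_len xs ys = length xs \<and> length xs < length ys \<and> ys ! length xs = i
     then Suc (length xs) else lcp_len xs ys)"
proof (induction xs arbitrary: ys)
  case Nil
  then show ?case by (cases ys) auto
next
  case (Cons a xs)
  then show ?case by (cases ys) auto
qed

text \<open>A node is a reduced word read from the right, the empty word being the root; so the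
  common ancestor of two nodes is their longest common suffix and the tree distance is given
  by the usual formula.\<close>

definition tdist :: "nat list \<Rightarrow> nat list \<Rightarrow> nat" where
  "tdist u v = length u + length v - 2 * lcp_len (rev u) (rev v)"

lemma tdist_commute: "tdist u v = tdist v u"
  unfolding tdist_def by (simp add: lcp_len_commute add.commute)

lemma tdist_self [simp]: "tdist u u = 0"
  unfolding tdist_def by simp

lemma tdist_eq_0_iff [simp]: "tdist u v = 0 \<longleftrightarrow> u = v"
proof
  assume "tdist u v = 0"
  moreover have "lcp_len (rev u) (rev v) \<le> length u" "lcp_len (rev u) (rev v) \<le> length v"
    using lcp_len_le1[of "rev u" "rev v"] lcp_len_le2[of "rev u" "rev v"] by auto
  ultimately have "lcp_len (rev u) (rev v) = length (rev u)" "length (rev u) = length (rev v)"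
    unfolding tdist_def by auto
  then show "u = v"
    using lcp_len_eq_length_imp_eq by fastforce
qed simp

text \<open>\<open>in_subtree x i v\<close>: the node \<open>x\<close> lies in the subtree rooted at the child \<open>i # v\<close>
  of \<open>v\<close>, i.e.\ \<open>i # v\<close> is a suffix of \<open>x\<close>.\<close>

definition in_subtree :: "nat list \<Rightarrow> nat \<Rightarrow> nat list \<Rightarrow> bool" where
  "in_subtree x i v \<longleftrightarrow>
     lcp_len (rev v) (rev x) = length v \<and> length v < length x \<and> rev x ! length v = i"

lemma tdist_Cons:
  "tdist x (i # v) = (if in_subtree x i v then tdist x v - 1 else tdist x v + 1)"
  and tdist_pos_if_in_subtree: "in_subtree x i v \<Longrightarrow> tdist x v \<ge> 1"
proof -
  have le: "lcp_len (rev v) (rev x) \<le> length v" "lcp_len (rev v) (rev x) \<le> length x"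
    using lcp_len_le1[of "rev v" "rev x"] lcp_len_le2[of "rev v" "rev x"] by auto
  have Cons: "tdist x (i # v) = length x + Suc (length v) - 2 * lcp_len (rev v @ [i]) (rev x)"
    and base: "tdist x v = length x + length v - 2 * lcp_len (rev v) (rev x)"
    unfolding tdist_def by (simp_all add: lcp_len_commute)
  show "tdist x (i # v) = (if in_subtree x i v then tdist x v - 1 else tdist x v + 1)"
    unfolding Cons base lcp_len_snoc in_subtree_def using le by auto
  show "in_subtree x i v \<Longrightarrow> tdist x v \<ge> 1"
    unfolding base in_subtree_def using le by auto
qed

lemma tdist_Cons_in_subtree: "in_subtree x i v \<Longrightarrow> tdist x (i # v) + 1 = tdist x v"
  using tdist_Cons tdist_pos_if_in_subtree by fastforce

lemma tdist_Cons_not_in_subtree: "\<not> in_subtree x i v \<Longrightarrow> tdist x (i # v) = tdist x v + 1"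
  using tdist_Cons by simp

lemma badj_sym: "badj a b \<Longrightarrow> badj b a"
  unfolding badj_def by auto

lemma badj_bnodes: "badj a b \<Longrightarrow> a \<in> bnodes \<and> b \<in> bnodes"
  unfolding badj_def by auto

lemma badj_neq: "badj a b \<Longrightarrow> a \<noteq> b"
  unfolding badj_def by auto

lemma badj_tdist: "badj a b \<Longrightarrow> tdist x a = tdist x b + 1 \<or> tdist x b = tdist x a + 1"
  unfolding badj_def by (metis tdist_Cons_in_subtree tdist_Cons_not_in_subtree)

lemma badj_tdist_1: "badj a b \<Longrightarrow> tdist a b = 1"
  using badj_tdist[of a b a] by auto

lemma bnodes_tl: "v \<in> bnodes \<Longrightarrow> tl v \<in> bnodes"
  unfolding bnodes_def by (cases v) (auto simp: successively_Cons)

lemma exists_step_toward: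
  assumes v: "v \<in> bnodes" and x: "x \<in> bnodes" and "x \<noteq> v"
  shows "\<exists>w. badj v w \<and> tdist x w + 1 = tdist x v"
proof (cases "lcp_len (rev v) (rev x) < length v")
  case True
  then obtain h w where vw: "v = h # w" by (cases v) auto
  have "\<not> in_subtree x h w"
    using True unfolding vw in_subtree_def by (auto simp: lcp_len_snoc)
  then have "tdist x v = tdist x w + 1" unfolding vw by (rule tdist_Cons_not_in_subtree)
  moreover have "badj v w" unfolding badj_def using v bnodes_tl[OF v] vw by auto
  ultimately show ?thesis by auto
next
  case False
  then have l: "lcp_len (rev v) (rev x) = length v" using lcp_len_le1[of "rev v" "rev x"] by auto
  have lt: "length v < length x"
  proof (rule ccontr)
    assume "\<not> length v < length x"
    moreover have "length v \<le> length x" using l lcp_len_le2[of "rev v" "rev x"] by auto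
    ultimately have "rev v = rev x" by (intro lcp_len_eq_length_imp_eq) (use l in auto)
    with \<open>x \<noteq> v\<close> show False by simp
  qed
  define i where "i = rev x ! length v"
  have sub: "in_subtree x i v" unfolding in_subtree_def i_def using l lt by simp
  have ne_sym: "(\<lambda>a b. b \<noteq> a) = ((\<noteq>) :: nat \<Rightarrow> nat \<Rightarrow> bool)" by (auto intro!: ext)
  have sx: "successively (\<noteq>) (rev x)"
    using x unfolding bnodes_def successively_rev ne_sym by auto
  have "i \<in> {0,1,2}"
    using x nth_mem[of "length v" "rev x"] lt unfolding i_def bnodes_def by auto
  moreover have "successively (\<noteq>) (i # v)"
  proof (cases v)
    case (Cons h t)
    have "h = rev x ! (length v - 1)"
      using lcp_len_eq_length_nth[of "rev v" "rev x" "length v - 1"] l Cons by (simp add: nth_append)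
    moreover have "rev x ! (length v - 1) \<noteq> rev x ! length v"
      using successively_nth[OF sx, of "length v - 1"] lt Cons by simp
    ultimately have "i \<noteq> h" unfolding i_def by auto
    then show ?thesis using v Cons unfolding bnodes_def by (simp add: successively_Cons)
  qed simp
  ultimately have "badj v (i # v)" using v unfolding badj_def bnodes_def by auto
  then show ?thesis using tdist_Cons_in_subtree[OF sub] by blast
qed

lemma step_toward_unique:
  assumes "badj v w1" "badj v w2" "tdist x w1 < tdist x v" "tdist x w2 < tdist x v"
  shows "w1 = w2"
proof -
  have step: "(\<exists>i. w = i # v \<and> in_subtree x i v) \<or> (\<exists>h. v = h # w \<and> \<not> in_subtree x h w)"
    if "badj v w" "tdist x w < tdist x v" for w
  proof -
    from that(1) obtain i where "w = i # v \<or> v = i # w" unfolding badj_def by auto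
    then show ?thesis
      using that(2) tdist_Cons_not_in_subtree[of x i v] tdist_Cons_in_subtree[of x i w] by auto
  qed
  have False if "in_subtree x i v" "v = h # w" "\<not> in_subtree x h w" for i h w
  proof -
    have "lcp_len (rev w @ [h]) (rev x) = Suc (length w)"
      using that(1,2) unfolding in_subtree_def by simp
    then have "in_subtree x h w" unfolding lcp_len_snoc in_subtree_def
      using lcp_len_le1[of "rev w" "rev x"] by (auto split: if_splits)
    with that(3) show False by simp
  qed
  then show ?thesis
    using step[OF assms(1,3)] step[OF assms(2,4)] unfolding in_subtree_def by blast
qed

lemma relpow_badj_tdist: "(u, v) \<in> {(a, b). badj a b} ^^ n \<Longrightarrow> tdist u v \<le> n"
proof (induction n arbitrary: v)
  case (Suc n)
  then obtain y where "(u, y) \<in> {(a, b). badj a b} ^^ n" "badj y v" by auto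
  then show ?case using Suc.IH badj_tdist[of y v u] by force
qed simp

lemma tdist_relpow_badj:
  "u \<in> bnodes \<Longrightarrow> v \<in> bnodes \<Longrightarrow> (u, v) \<in> {(a, b). badj a b} ^^ tdist u v"
proof (induction "tdist u v" arbitrary: v)
  case (Suc m)
  then have "u \<noteq> v" by auto
  then obtain w where w: "badj v w" "tdist u w + 1 = tdist u v"
    using exists_step_toward Suc.prems by metis
  moreover have "tdist u w = m" using w(2) Suc.hyps(2) by simp
  ultimately have "(u, w) \<in> {(a, b). badj a b} ^^ m"
    using Suc.hyps(1) Suc.prems badj_bnodes by blast
  moreover have "badj w v" using w(1) badj_sym by blast
  ultimately have "(u, v) \<in> {(a, b). badj a b} ^^ Suc m" by (auto intro: relpow_Suc_I)
  with Suc.hyps(2) show ?case by simp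
qed simp

lemma ndist_eq_tdist: "u \<in> bnodes \<Longrightarrow> v \<in> bnodes \<Longrightarrow> ndist u v = tdist u v"
  unfolding ndist_def by (rule Least_equality) (auto intro: tdist_relpow_badj dest: relpow_badj_tdist)

section \<open>Relative position of two edges\<close>

lemma oedgesD: "A \<in> oedges \<Longrightarrow> badj (fst A) (snd A) \<and> fst A \<in> bnodes \<and> snd A \<in> bnodes"
  unfolding oedges_def using badj_bnodes by (cases A) auto

lemma orev_in_oedges: "A \<in> oedges \<Longrightarrow> orev A \<in> oedges"
  unfolding oedges_def orev_def using badj_sym by auto

lemma badj_in_oedges: "badj v w \<Longrightarrow> (w, v) \<in> oedges"
  unfolding oedges_def using badj_sym by auto

lemma orev_neq: "A \<in> oedges \<Longrightarrow> orev A \<noteq> A"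
  using oedgesD[of A] badj_neq by (cases A) (auto simp: orev_def)

lemma same_edge_cases:
  assumes "A \<in> oedges" "B \<in> oedges" "same_edge A B"
  shows "B = A \<or> B = orev A"
proof -
  have "fst A \<noteq> snd A" "fst B \<noteq> snd B" using assms oedgesD badj_neq by blast+
  then show ?thesis using assms(3) unfolding same_edge_def orev_def doubleton_eq_iff
    by (cases A; cases B) auto
qed

lemma pair_type_middist_0:
  assumes "middist A B = 0"
  shows "pair_type t A B \<longleftrightarrow> ((t = 1 \<or> t = 3) \<and> B = A) \<or> ((t = 2 \<or> t = 4) \<and> B = orev A)"
  using assms unfolding pair_type_def by auto

text \<open>The neighbour of \<open>a0\<close> towards \<open>b0\<close> is also nearer to \<open>b1\<close>, hence equals \<open>a1\<close>;
  this is impossible unless \<open>a0 = b0\<close>.\<close>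

lemma crossed_distances_imp_0:
  assumes a: "badj a0 a1" and b: "badj b0 b1"
    and d: "tdist a0 b0 = m" "tdist a1 b1 = m" "tdist a0 b1 = Suc m" "tdist a1 b0 = Suc m"
  shows "m = 0"
proof (rule ccontr)
  assume "m \<noteq> 0"
  then have "b0 \<noteq> a0" using d(1) by auto
  then obtain t where t: "badj a0 t" "tdist b0 t + 1 = tdist b0 a0"
    using exists_step_toward a b badj_bnodes by metis
  have "tdist b1 t \<le> tdist b0 t + 1"
    using badj_tdist[OF b, of t] tdist_commute[of t b0] tdist_commute[of t b1] by auto
  then have "tdist b1 t < tdist b1 a0" and "tdist b1 a1 < tdist b1 a0"
    using t(2) d tdist_commute[of b0 a0] tdist_commute[of b1 a0] tdist_commute[of b1 a1] by simp_all
  then have "t = a1" using step_toward_unique[OF t(1) a] by blast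
  then show False using t(2) d(4) d(1) tdist_commute[of b0 a0] tdist_commute[of b0 a1] by simp
qed

definition endpt :: "bool \<Rightarrow> nat list \<times> nat list \<Rightarrow> nat list" where
  "endpt b A = (if b then snd A else fst A)"

lemma endpt_simps [simp]: "endpt False (a, b) = a" "endpt True (a, b) = b"
  by (auto simp: endpt_def)

lemma endpt_orev: "endpt b (orev A) = endpt (\<not> b) A"
  unfolding endpt_def orev_def by auto

lemma badj_endpt: "A \<in> oedges \<Longrightarrow> badj (endpt i A) (endpt (\<not> i) A)"
  using oedgesD[of A] badj_sym by (cases i) (auto simp: endpt_def)

lemma endpt_in_bnodes: "A \<in> oedges \<Longrightarrow> endpt i A \<in> bnodes"
  using oedgesD[of A] by (cases i) (auto simp: endpt_def)

text \<open>\<open>edge_config A B i j m\<close>: \<open>endpt i A\<close> and \<open>endpt j B\<close> are the nearest endpoints of the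
  two edges, at distance \<open>m\<close>.  So \<open>A\<close> points towards \<open>B\<close> iff \<open>i\<close>, and \<open>B\<close> points towards \<open>A\<close>
  iff \<open>j\<close>, which determines the type.\<close>

definition edge_config ::
    "nat list \<times> nat list \<Rightarrow> nat list \<times> nat list \<Rightarrow> bool \<Rightarrow> bool \<Rightarrow> nat \<Rightarrow> bool" where
  "edge_config A B i j m \<longleftrightarrow>
     tdist (endpt i A) (endpt j B) = m \<and> tdist (endpt i A) (endpt (\<not> j) B) = Suc m \<and>
     tdist (endpt (\<not> i) A) (endpt j B) = Suc m \<and> tdist (endpt (\<not> i) A) (endpt (\<not> j) B) = Suc (Suc m)"

definition config_type :: "bool \<Rightarrow> bool \<Rightarrow> nat" where
  "config_type i j = (if i then (if j then 2 else 1) else (if j then 3 else 4))"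

lemma edge_config_orev: "edge_config A B i j m \<Longrightarrow> edge_config A (orev B) i (\<not> j) m"
  unfolding edge_config_def endpt_orev by simp

lemma edge_config_not_same_edge:
  assumes A: "A \<in> oedges" and B: "B \<in> oedges" and conf: "edge_config A B i j m"
  shows "\<not> same_edge A B"
proof
  have le1: "tdist (endpt p A) (endpt q A) \<le> 1" for p q
    using oedgesD[OF A] badj_tdist_1[of "fst A" "snd A"] tdist_commute[of "fst A" "snd A"]
    by (auto simp: endpt_def)
  assume "same_edge A B"
  then have "B = A \<or> B = orev A" using same_edge_cases A B by blast
  then show False
    using conf le1[of "\<not> i" "\<not> j"] le1[of "\<not> i" j] by (auto simp: edge_config_def endpt_orev)
qed

lemma adjacent_distances_cases:
  fixes a b c d :: nat
  assumes r1: "a = c + 1 \<or> c = a + 1" and r2: "b = d + 1 \<or> d = b + 1"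
    and r3: "a = b + 1 \<or> b = a + 1" and r4: "c = d + 1 \<or> d = c + 1"
    and s1: "\<not> (a = d \<and> b = Suc a \<and> c = Suc a)"
    and s2: "\<not> (b = c \<and> a = Suc b \<and> d = Suc b)"
  shows "(b = Suc a \<and> c = Suc a \<and> d = Suc (Suc a)) \<or>
         (a = Suc b \<and> d = Suc b \<and> c = Suc (Suc b)) \<or>
         (d = Suc c \<and> a = Suc c \<and> b = Suc (Suc c)) \<or>
         (c = Suc d \<and> b = Suc d \<and> a = Suc (Suc d))"
  using r1
proof
  assume h1: "a = c + 1"
  from r3 show ?thesis
  proof
    assume h3: "a = b + 1"
    from r2 show ?thesis
    proof
      assume "b = d + 1" then show ?thesis using h1 h3 by simp
    next
      assume "d = b + 1" then show ?thesis using h1 h3 s2 by simp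
    qed
  next
    assume h3: "b = a + 1"
    from r4 show ?thesis
    proof
      assume "c = d + 1" then show ?thesis using h1 h3 r2 by auto
    next
      assume "d = c + 1" then show ?thesis using h1 h3 by simp
    qed
  qed
next
  assume h1: "c = a + 1"
  from r3 show ?thesis
  proof
    assume h3: "a = b + 1"
    from r2 show ?thesis
    proof
      assume "b = d + 1" then show ?thesis using h1 h3 r4 by auto
    next
      assume "d = b + 1" then show ?thesis using h1 h3 by simp
    qed
  next
    assume h3: "b = a + 1"
    from r2 show ?thesis
    proof
      assume "b = d + 1" then show ?thesis using h1 h3 s1 by simp
    next
      assume "d = b + 1" then show ?thesis using h1 h3 by simp
    qed
  qed
qed

lemma edge_config_exists:
  assumes A: "A \<in> oedges" and B: "B \<in> oedges" and not_same: "\<not> same_edge A B"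
  obtains i j m where "edge_config A B i j m"
proof -
  obtain a0 a1 b0 b1 where AB: "A = (a0, a1)" "B = (b0, b1)" by (cases A; cases B)
  have a: "badj a0 a1" and b: "badj b0 b1" using oedgesD A B AB by auto
  have r1: "tdist a0 b0 = tdist a1 b0 + 1 \<or> tdist a1 b0 = tdist a0 b0 + 1"
    and r2: "tdist a0 b1 = tdist a1 b1 + 1 \<or> tdist a1 b1 = tdist a0 b1 + 1"
    using badj_tdist[OF a, of b0] badj_tdist[OF a, of b1] tdist_commute by metis+
  have r3: "tdist a0 b0 = tdist a0 b1 + 1 \<or> tdist a0 b1 = tdist a0 b0 + 1"
    and r4: "tdist a1 b0 = tdist a1 b1 + 1 \<or> tdist a1 b1 = tdist a1 b0 + 1"
    using badj_tdist[OF b] by blast+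
  have s1: "\<not> (tdist a0 b0 = tdist a1 b1 \<and> tdist a0 b1 = Suc (tdist a0 b0) \<and> tdist a1 b0 = Suc (tdist a0 b0))"
  proof
    assume h: "tdist a0 b0 = tdist a1 b1 \<and> tdist a0 b1 = Suc (tdist a0 b0) \<and> tdist a1 b0 = Suc (tdist a0 b0)"
    then have "tdist a0 b0 = 0" by (intro crossed_distances_imp_0[OF a b refl]) auto
    with h have "a0 = b0" "a1 = b1" by simp_all
    with not_same AB show False unfolding same_edge_def by auto
  qed
  have s2: "\<not> (tdist a0 b1 = tdist a1 b0 \<and> tdist a0 b0 = Suc (tdist a0 b1) \<and> tdist a1 b1 = Suc (tdist a0 b1))"
  proof
    assume h: "tdist a0 b1 = tdist a1 b0 \<and> tdist a0 b0 = Suc (tdist a0 b1) \<and> tdist a1 b1 = Suc (tdist a0 b1)"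
    then have "tdist a0 b1 = 0" by (intro crossed_distances_imp_0[OF a badj_sym[OF b] refl]) auto
    with h have "a0 = b1" "a1 = b0" by simp_all
    with not_same AB show False unfolding same_edge_def by auto
  qed
  have "edge_config A B False False (tdist a0 b0) \<or> edge_config A B False True (tdist a0 b1) \<or>
        edge_config A B True False (tdist a1 b0) \<or> edge_config A B True True (tdist a1 b1)"
    using adjacent_distances_cases[OF r1 r2 r3 r4 s1 s2] unfolding edge_config_def AB by auto
  then show ?thesis using that by blast
qed

lemma on_geod_iff: "on_geod x A B \<longleftrightarrow> edist x A + edist x B + 1 = middist A B"
proof -
  have "on_geod x A B \<longleftrightarrow> real (edist x A + edist x B + 1) = real (middist A B)"
    unfolding on_geod_def by simp
  then show ?thesis by linarith
qed

lemma middist_pair_type_edge_config: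
  assumes A: "A \<in> oedges" and B: "B \<in> oedges" and conf: "edge_config A B i j m"
  shows "middist A B = Suc m" and "pair_type t A B \<longleftrightarrow> t = config_type i j"
proof -
  obtain a0 a1 b0 b1 where AB: "A = (a0, a1)" "B = (b0, b1)" by (cases A; cases B)
  have "a0 \<in> bnodes" "a1 \<in> bnodes" "b0 \<in> bnodes" "b1 \<in> bnodes" using oedgesD A B AB by auto
  then have edist_eq: "edist x (a0, a1) = min (tdist x a0) (tdist x a1)"
      "edist x (b0, b1) = min (tdist x b0) (tdist x b1)"
    if "x \<in> {a0, a1, b0, b1}" for x
    using that by (auto simp: edist_def ndist_eq_tdist)
  have c: "tdist (endpt i A) (endpt j B) = m" "tdist (endpt i A) (endpt (\<not> j) B) = Suc m"
     "tdist (endpt (\<not> i) A) (endpt j B) = Suc m" "tdist (endpt (\<not> i) A) (endpt (\<not> j) B) = Suc (Suc m)"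
    using conf unfolding edge_config_def by auto
  have "middist A B = 1 + min (min (tdist a0 b0) (tdist a0 b1)) (min (tdist a1 b0) (tdist a1 b1))"
    using edge_config_not_same_edge[OF A B conf] by (simp add: middist_def edist_eq AB)
  then show md: "middist A B = Suc m"
    using c by (cases i; cases j) (auto simp: AB)
  have sym: "tdist b0 a0 = tdist a0 b0" "tdist b0 a1 = tdist a1 b0"
      "tdist b1 a0 = tdist a0 b1" "tdist b1 a1 = tdist a1 b1"
    using tdist_commute by blast+
  have "on_geod x A B \<longleftrightarrow> edist x (a0, a1) + edist x (b0, b1) = m" for x
    unfolding on_geod_iff md using AB by simp
  then have og: "on_geod a0 A B \<longleftrightarrow> min (tdist a0 b0) (tdist a0 b1) = m"
      "on_geod a1 A B \<longleftrightarrow> min (tdist a1 b0) (tdist a1 b1) = m"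
      "on_geod b0 A B \<longleftrightarrow> min (tdist a0 b0) (tdist a1 b0) = m"
      "on_geod b1 A B \<longleftrightarrow> min (tdist a0 b1) (tdist a1 b1) = m"
    by (simp_all add: edist_eq sym)
  show "pair_type t A B \<longleftrightarrow> t = config_type i j"
    unfolding pair_type_def md using c og by (cases i; cases j) (auto simp: AB config_type_def)
qed

lemma edge_config_step_away:
  assumes B: "B \<in> oedges" and conf: "edge_config A B i True m"
    and w: "badj (fst B) w" "w \<noteq> snd B"
  shows "edge_config A (w, fst B) i True (Suc m)"
proof -
  have farther: "tdist z w = tdist z (fst B) + 1" if "tdist z (snd B) < tdist z (fst B)" for z
  proof -
    have "\<not> tdist z w < tdist z (fst B)"
      using step_toward_unique[OF w(1) _ _ that] oedgesD[OF B] w(2) by blast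
    then show ?thesis using badj_tdist[OF w(1), of z] by linarith
  qed
  show ?thesis
    using conf farther[of "endpt i A"] farther[of "endpt (\<not> i) A"]
    unfolding edge_config_def by (auto simp: endpt_def)
qed

lemma edge_config_step_toward_next:
  assumes A: "A \<in> oedges" and conf: "edge_config A B i False m" and "m \<noteq> 0"
    and t: "badj (fst B) t" "tdist (endpt (\<not> i) A) t = m"
  shows "edge_config A (t, fst B) i False (m - 1)"
proof -
  have c: "tdist (endpt i A) (fst B) = m" "tdist (endpt (\<not> i) A) (fst B) = Suc m"
    using conf unfolding edge_config_def by (auto simp: endpt_def)
  have "tdist (endpt i A) t \<noteq> Suc m"
    using crossed_distances_imp_0[OF badj_endpt[OF A] t(1) c(1) t(2) _ c(2)] \<open>m \<noteq> 0\<close> by auto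
  then have "tdist (endpt i A) t = m - 1"
    using badj_tdist[OF t(1), of "endpt i A"] c(1) by linarith
  then show ?thesis
    using c t(2) \<open>m \<noteq> 0\<close> unfolding edge_config_def by (simp add: endpt_def)
qed

lemma edge_config_step_toward_sibling:
  assumes A: "A \<in> oedges" and conf: "edge_config A B i False m"
    and t: "badj (fst B) t" "tdist (endpt (\<not> i) A) t = m"
    and w: "badj (fst B) w" "w \<noteq> t"
  shows "edge_config A (w, fst B) i True m"
proof -
  define x y where "x = endpt (\<not> i) A" and "y = endpt i A"
  have c: "tdist y (fst B) = m" "tdist x (fst B) = Suc m"
    using conf unfolding edge_config_def x_def y_def by (auto simp: endpt_def)
  have "tdist x t < tdist x (fst B)" using t(2) c(2) unfolding x_def by simp
  then have "\<not> tdist x w < tdist x (fst B)" using step_toward_unique[OF w(1) t(1)] w(2) by blast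
  then have xw: "tdist x w = Suc (Suc m)"
    using badj_tdist[OF w(1), of x] c(2) by linarith
  have "tdist y w = Suc m"
    using badj_tdist[OF w(1), of y] badj_tdist[OF badj_endpt[OF A, of i], of w] xw c(1)
      tdist_commute[of w y] tdist_commute[of w x] unfolding x_def y_def by linarith
  then show ?thesis
    using c xw unfolding edge_config_def x_def y_def by (simp add: endpt_def)
qed

lemma edge_config_step_toward:
  assumes A: "A \<in> oedges" and B: "B \<in> oedges" and conf: "edge_config A B i False m"
  obtains t where "badj (fst B) t" "t \<noteq> snd B"
    "m = 0 \<Longrightarrow> (t, fst B) = (if i then A else orev A)"
    "m \<noteq> 0 \<Longrightarrow> edge_config A (t, fst B) i False (m - 1)"
    "\<And>w. badj (fst B) w \<Longrightarrow> w \<noteq> t \<Longrightarrow> edge_config A (w, fst B) i True m"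
proof -
  define x where "x = endpt (\<not> i) A"
  have c: "tdist (endpt i A) (fst B) = m" "tdist x (fst B) = Suc m" "tdist x (snd B) = Suc (Suc m)"
    using conf unfolding edge_config_def x_def by (auto simp: endpt_def)
  have "x \<noteq> fst B" using c(2) by auto
  then obtain t where t: "badj (fst B) t" "tdist x t + 1 = tdist x (fst B)"
    using exists_step_toward oedgesD[OF B] endpt_in_bnodes[OF A] unfolding x_def by metis
  have xt: "tdist (endpt (\<not> i) A) t = m" using t(2) c(2) unfolding x_def by simp
  show ?thesis
  proof (rule that[OF t(1)])
    show "t \<noteq> snd B" using xt c(3) unfolding x_def by auto
    show "(t, fst B) = (if i then A else orev A)" if "m = 0"
      using xt c(1) that by (cases A) (auto simp: endpt_def orev_def)
  qed (use edge_config_step_toward_next[OF A conf _ t(1) xt]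
         edge_config_step_toward_sibling[OF A conf t(1) xt] in auto)
qed

lemma edge_config_from_fst:
  assumes A: "A \<in> oedges" and w: "badj (fst A) w" "w \<noteq> snd A"
  shows "edge_config A (w, fst A) False True 0"
proof -
  have a: "badj (fst A) (snd A)" using oedgesD[OF A] by simp
  have "tdist (snd A) w = 2"
    using badj_tdist[OF w(1), of "snd A"] badj_tdist_1[OF a] tdist_commute[of "snd A" "fst A"] w(2)
    by (metis One_nat_def add_is_1 one_add_one tdist_eq_0_iff)
  then show ?thesis
    using badj_tdist_1[OF w(1)] badj_tdist_1[OF a] tdist_commute[of "snd A" "fst A"]
    unfolding edge_config_def endpt_def by auto
qed

lemma edge_config_from_snd:
  assumes A: "A \<in> oedges" and w: "badj (snd A) w" "w \<noteq> fst A"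
  shows "edge_config A (w, snd A) True True 0"
proof -
  have a: "badj (fst A) (snd A)" using oedgesD[OF A] by simp
  have "tdist (fst A) w = 2"
    using badj_tdist[OF w(1), of "fst A"] badj_tdist_1[OF a] w(2)
    by (metis One_nat_def add_is_1 one_add_one tdist_eq_0_iff)
  then show ?thesis
    using badj_tdist_1[OF w(1)] badj_tdist_1[OF a] unfolding edge_config_def endpt_def by auto
qed

section \<open>One step of the propagation\<close>

lemma neighbours_eq:
  assumes v: "v \<in> bnodes"
  shows "{w. badj v w} =
    (if v = [] then {[0], [1], [2]} else insert (tl v) ((\<lambda>i. i # v) ` ({0,1,2} - {hd v})))"
proof (cases v)
  case Nil
  have "badj [] w \<longleftrightarrow> w \<in> {[0], [1], [2]}" for w
    unfolding badj_def bnodes_def by auto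
  then show ?thesis using Nil by auto
next
  case (Cons h t)
  have "badj v w \<longleftrightarrow> w = t \<or> (\<exists>i\<in>{0,1,2} - {h}. w = i # v)" for w
  proof
    assume "badj v w"
    then obtain i where w: "w \<in> bnodes" "w = i # v \<or> v = i # w" unfolding badj_def by auto
    then show "w = t \<or> (\<exists>i\<in>{0,1,2} - {h}. w = i # v)"
      using Cons unfolding bnodes_def by (auto simp: successively_Cons)
  next
    assume "w = t \<or> (\<exists>i\<in>{0,1,2} - {h}. w = i # v)"
    then show "badj v w"
      using v bnodes_tl[OF v] Cons unfolding badj_def bnodes_def by (auto simp: successively_Cons)
  qed
  then show ?thesis using Cons by auto
qed

lemma card_neighbours:
  assumes v: "v \<in> bnodes"
  shows "finite {w. badj v w}" and "card {w. badj v w} = 3"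
proof -
  show "finite {w. badj v w}" unfolding neighbours_eq[OF v] by auto
  show "card {w. badj v w} = 3"
  proof (cases v)
    case (Cons h t)
    have "h \<in> {0,1,2}" using v Cons unfolding bnodes_def by auto
    moreover have "card ((\<lambda>i. i # v) ` ({0,1,2} - {h})) = card ({0::nat,1,2} - {h})"
      by (rule card_image) (auto simp: inj_on_def)
    ultimately have "card ((\<lambda>i. i # v) ` ({0,1,2} - {h})) = 2" by auto
    moreover have "t \<notin> (\<lambda>i. i # v) ` ({0,1,2} - {h})" using Cons by auto
    ultimately show ?thesis unfolding neighbours_eq[OF v] using Cons by simp
  qed (use neighbours_eq[OF v] in simp)
qed

lemma other_neighbours:
  assumes "v \<in> bnodes" "badj v b"
  obtains w1 w2 where "w1 \<noteq> w2" "w1 \<noteq> b" "w2 \<noteq> b" "{w. badj v w} = {b, w1, w2}"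
proof -
  have "card ({w. badj v w} - {b}) = 2"
    using card_neighbours[OF assms(1)] assms(2) by simp
  then obtain w1 w2 where "{w. badj v w} - {b} = {w1, w2}" "w1 \<noteq> w2"
    by (auto simp: card_2_iff)
  then show ?thesis using that assms(2) by blast
qed

lemma Gk_Suc_eq:
  assumes B: "B \<in> oedges"
  obtains w1 w2 where "w1 \<noteq> w2" "w1 \<noteq> snd B" "w2 \<noteq> snd B" "{w. badj (fst B) w} = {snd B, w1, w2}"
    "\<And>A. Gk (Suc k) B A =
       -1/3 * Gk k (orev B) A + 2/3 * Gk k (w1, fst B) A + 2/3 * Gk k (w2, fst B) A"
proof -
  obtain w1 w2 where w: "w1 \<noteq> w2" "w1 \<noteq> snd B" "w2 \<noteq> snd B"
    and N: "{w. badj (fst B) w} = {snd B, w1, w2}"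
    using other_neighbours oedgesD[OF B] by metis
  define F where "F = {(snd B, fst B), (w1, fst B), (w2, fst B)}"
  have F: "F \<subseteq> oedges"
    unfolding F_def using N badj_in_oedges by blast
  have G1_0: "G1 B C = 0" if "C \<in> oedges - F" for C
  proof (rule ccontr)
    assume "G1 B C \<noteq> 0"
    then have "C = (snd B, fst B) \<or> snd C = fst B"
      unfolding G1_def follows_def orev_def by (auto split: if_splits)
    moreover have "badj (snd C) (fst C)" using that oedgesD badj_sym by blast
    ultimately have "C \<in> F" using N unfolding F_def by (cases C) auto
    with that show False by blast
  qed
  have "Gk (Suc k) B A = (\<Sum>C\<in>F. G1 B C * Gk k C A)" for A
  proof -
    have "Gk (Suc k) B A = (\<Sum>\<^sub>\<infinity>C\<in>F. G1 B C * Gk k C A)"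
      by (simp, rule infsum_cong_neutral) (use F G1_0 in auto)
    then show ?thesis by (simp add: F_def)
  qed
  moreover have "(\<Sum>C\<in>F. G1 B C * Gk k C A) =
      -1/3 * Gk k (orev B) A + 2/3 * Gk k (w1, fst B) A + 2/3 * Gk k (w2, fst B) A" for A
    unfolding F_def using w by (cases B) (auto simp: G1_def follows_def orev_def)
  ultimately have "Gk (Suc k) B A =
      -1/3 * Gk k (orev B) A + 2/3 * Gk k (w1, fst B) A + 2/3 * Gk k (w2, fst B) A" for A
    by simp
  then show ?thesis using that w N by blast
qed

section \<open>The generating functions\<close>

definition sqrt2 :: complex where
  "sqrt2 = complex_of_real (sqrt 2)"

lemma sqrt2_squared: "sqrt2 ^ 2 = 2"
  unfolding sqrt2_def by (simp flip: of_real_power)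

lemma sqrt2_neq_0: "sqrt2 \<noteq> 0"
  unfolding sqrt2_def by simp

lemma mu_eq: "mu x = 2 * x / (1 + 9/2 * x ^ 2)"
proof -
  have "x ^ 2 / (complex_of_real rr) ^ 2 = 9/2 * x ^ 2"
    unfolding rr_def by (simp add: power_divide flip: of_real_power)
  then show ?thesis unfolding mu_def by simp
qed

lemma one_plus_csqrt_neq_0: "1 + csqrt w \<noteq> 0"
proof
  assume "1 + csqrt w = 0"
  then have "Re (csqrt w) = -1" by (simp add: add_eq_0_iff del: Re_csqrt)
  with Re_csqrt[of w] show False by linarith
qed

text \<open>The rationalised form of \<open>z_-\<close>, without the removable singularity at \<open>0\<close>.\<close>

lemma zminus_eq: "zminus m = 2 * m / (1 + csqrt (1 - 4 * m ^ 2))"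
proof (cases "m = 0")
  case False
  have "(1 - csqrt (1 - 4 * m ^ 2)) * (1 + csqrt (1 - 4 * m ^ 2)) = 4 * m ^ 2"
    by (simp add: algebra_simps power2_eq_square [symmetric])
  then show ?thesis
    using False one_plus_csqrt_neq_0 unfolding zminus_def by (simp add: field_simps power2_eq_square)
qed (simp add: zminus_def)

lemma zminus_quadratic: "zminus m = m * (1 + zminus m ^ 2)"
proof -
  define s where "s = csqrt (1 - 4 * m ^ 2)"
  have "s ^ 2 = 1 - 4 * m ^ 2" "1 + s \<noteq> 0"
    unfolding s_def by (simp_all add: one_plus_csqrt_neq_0)
  moreover have "zminus m = 2 * m / (1 + s)" unfolding s_def by (rule zminus_eq)
  ultimately show ?thesis by (simp add: field_simps) algebra
qed

lemma Zf_quadratic: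
  assumes "1 + 9/2 * x ^ 2 \<noteq> 0"
  shows "(1 + 9/2 * x ^ 2) * Zf x = 2 * x * (1 + Zf x ^ 2)"
  using zminus_quadratic[of "mu x"] assms unfolding Zf_def mu_eq by (simp add: field_simps)

lemma Zf_0 [simp]: "Zf 0 = 0"
  unfolding Zf_def mu_def zminus_def by simp

lemma Dd_0 [simp]: "Dd 0 = 1"
  unfolding Dd_def by simp

definition mu_dom :: "complex set" where
  "mu_dom = {x. 1 + 9/2 * x ^ 2 \<noteq> 0}"

text \<open>The branch cut of \<^const>\<open>csqrt\<close> is the closed negative real axis.\<close>

definition Zf_dom :: "complex set" where
  "Zf_dom = {x \<in> mu_dom. 1 - 4 * mu x ^ 2 \<notin> \<real>\<^sub>\<le>\<^sub>0}"

definition g_dom :: "complex set" where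
  "g_dom = {x \<in> Zf_dom. Dd x \<noteq> 0}"

lemma open_mu_dom: "open mu_dom"
  unfolding mu_dom_def by (intro open_Collect_neq continuous_intros)

lemma mu_holomorphic: "mu holomorphic_on mu_dom"
proof -
  have "(\<lambda>x. 2 * x / (1 + 9/2 * x ^ 2)) holomorphic_on mu_dom"
    unfolding mu_dom_def by (intro holomorphic_intros) auto
  then show ?thesis by (simp add: mu_eq [abs_def])
qed

lemma open_Zf_dom: "open Zf_dom"
proof -
  have "Zf_dom = mu_dom \<inter> (\<lambda>x. 1 - 4 * mu x ^ 2) -` (- \<real>\<^sub>\<le>\<^sub>0)"
    unfolding Zf_dom_def by auto
  also have "open \<dots>"
    by (intro continuous_open_preimage open_mu_dom holomorphic_on_imp_continuous_on
        holomorphic_intros mu_holomorphic) (auto simp: open_Compl)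
  finally show ?thesis .
qed

lemma Zf_holomorphic: "Zf holomorphic_on Zf_dom"
proof -
  have "Zf_dom \<subseteq> mu_dom" unfolding Zf_dom_def by blast
  then have "mu holomorphic_on Zf_dom" using mu_holomorphic holomorphic_on_subset by blast
  then have "(\<lambda>x. 2 * mu x / (1 + csqrt (1 - 4 * mu x ^ 2))) holomorphic_on Zf_dom"
    by (intro holomorphic_intros one_plus_csqrt_neq_0) (auto simp: Zf_dom_def)
  then show ?thesis unfolding Zf_def zminus_eq .
qed

lemma Dd_holomorphic: "Dd holomorphic_on Zf_dom"
proof -
  have "(\<lambda>x. (1 - 5/2 * x * Zf x) ^ 2 - x ^ 2 / 2 * Zf x ^ 4) holomorphic_on Zf_dom"
    by (intro holomorphic_intros Zf_holomorphic) auto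
  then show ?thesis by (simp add: Dd_def [abs_def])
qed

lemma open_g_dom: "open g_dom"
proof -
  have "g_dom = Zf_dom \<inter> Dd -` (- {0})"
    unfolding g_dom_def by auto
  also have "open \<dots>"
    by (intro continuous_open_preimage open_Zf_dom holomorphic_on_imp_continuous_on
        Dd_holomorphic) auto
  finally show ?thesis .
qed

lemma zero_in_g_dom: "0 \<in> g_dom"
  by (simp add: g_dom_def Zf_dom_def mu_dom_def mu_def)

lemma g_dom_subset: "g_dom \<subseteq> Zf_dom"
  unfolding g_dom_def by auto

lemma Zf_holomorphic_g_dom: "Zf holomorphic_on g_dom"
  using Zf_holomorphic g_dom_subset by (rule holomorphic_on_subset)

lemma g2_holomorphic: "g2 holomorphic_on g_dom"
proof -
  have "(\<lambda>x. - (Zf x / (2 * complex_of_real (sqrt 2))) * (1 - 5/2 * x * Zf x + x ^ 2/2 * Zf x ^ 2)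
      / Dd x) holomorphic_on g_dom"
    using Dd_holomorphic g_dom_subset
    by (intro holomorphic_intros Zf_holomorphic_g_dom) (auto simp: g_dom_def holomorphic_on_subset)
  then show ?thesis by (simp add: g2_def [abs_def])
qed

lemma g3_holomorphic: "g3 holomorphic_on g_dom"
proof -
  have "(\<lambda>x. x * Zf x / 4 * (1 - 5/2 * x * Zf x + Zf x ^ 2) / Dd x) holomorphic_on g_dom"
    using Dd_holomorphic g_dom_subset
    by (intro holomorphic_intros Zf_holomorphic_g_dom) (auto simp: g_dom_def holomorphic_on_subset)
  then show ?thesis by (simp add: g3_def [abs_def])
qed

lemma g2_0 [simp]: "g2 0 = 0" and g3_0 [simp]: "g3 0 = 0"
  by (simp_all add: g2_def g3_def)

text \<open>All identities below follow from the quadratic equation for \<open>Zf\<close> after clearing the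
  denominator \<open>Dd\<close>.\<close>

context
  fixes x :: complex
  assumes x: "x \<in> g_dom"
begin

lemma Zf_quadratic_g_dom: "(1 + 9/2 * x ^ 2) * Zf x = 2 * x * (1 + Zf x ^ 2)"
  using x Zf_quadratic unfolding g_dom_def Zf_dom_def mu_dom_def by blast

lemma Dd_neq_0: "Dd x \<noteq> 0"
  using x unfolding g_dom_def by blast

lemma g2_equation: "sqrt2/3 * g2 x = x * (-(1 + g3 x)/3 + 4/(3 * sqrt2) * g2 x * Zf x)"
  using Dd_neq_0 sqrt2_neq_0 unfolding g2_def g3_def sqrt2_def [symmetric]
  by (simp add: field_simps) (use sqrt2_squared Zf_quadratic_g_dom Dd_def [of x] in algebra)

lemma g3_equation: "sqrt2/3 * g3 x = x * (- g2 x/3 + 4/(3 * sqrt2) * g3 x * Zf x)"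
  using Dd_neq_0 sqrt2_neq_0 unfolding g2_def g3_def sqrt2_def [symmetric]
  by (simp add: field_simps) (use sqrt2_squared Zf_quadratic_g_dom Dd_def [of x] in algebra)

lemma g1_Zf_equation:
  "(1 + g3 x) * Zf x / 3 = x * (g2 x * Zf x / (3 * sqrt2) + 2/3 * (1 + g3 x))"
  using Dd_neq_0 sqrt2_neq_0 unfolding g2_def g3_def sqrt2_def [symmetric]
  by (simp add: field_simps) (use sqrt2_squared Zf_quadratic_g_dom Dd_def [of x] in algebra)

lemma g2_Zf_equation: "g2 x * Zf x / 3 = x * (g3 x * Zf x / (3 * sqrt2) + 2/3 * g2 x)"
  using Dd_neq_0 sqrt2_neq_0 unfolding g2_def g3_def sqrt2_def [symmetric]
  by (simp add: field_simps) (use sqrt2_squared Zf_quadratic_g_dom Dd_def [of x] in algebra)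

lemma g4_eq_g2: "g4 x = g2 x"
  using Dd_neq_0 sqrt2_neq_0 unfolding g2_def g4_def sqrt2_def [symmetric]
  by (simp add: field_simps) (use sqrt2_squared Zf_quadratic_g_dom Dd_def [of x] in algebra)

lemma g1raw_eq: "x \<noteq> 0 \<Longrightarrow> g1raw x = 1 + g3 x"
  using Dd_neq_0 sqrt2_neq_0 unfolding g1raw_def g3_def sqrt2_def [symmetric]
  by (simp add: field_simps) (use sqrt2_squared Zf_quadratic_g_dom Dd_def [of x] in algebra)

end

lemma g1_0: "g1 0 = 1"
proof -
  have "eventually (\<lambda>x. x \<in> g_dom) (at (0::complex))"
    using open_g_dom zero_in_g_dom eventually_at_topological by blast
  moreover have "eventually (\<lambda>x. x \<noteq> 0) (at (0::complex))"
    by (simp add: eventually_at_filter)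
  ultimately have "eventually (\<lambda>x. 1 + g3 x = g1raw x) (at (0::complex))"
    by eventually_elim (simp add: g1raw_eq)
  moreover have "isCont g3 0"
    using g3_holomorphic open_g_dom zero_in_g_dom
    by (meson continuous_on_eq_continuous_at holomorphic_on_imp_continuous_on)
  then have "((\<lambda>x. 1 + g3 x) \<longlongrightarrow> 1) (at 0)"
    by (metis add.right_neutral g3_0 isCont_def tendsto_add_const_iff)
  ultimately have "(g1raw \<longlongrightarrow> 1) (at 0)" using Lim_transform_eventually by blast
  then show ?thesis unfolding g1_def by (simp add: tendsto_Lim)
qed

text \<open>\<open>gen 1\<close> is \<^const>\<open>g1\<close> with its removable singularity at \<open>0\<close> filled in, and
  \<open>gen 4 = gen 2\<close> because \<open>g4 = g2\<close>.\<close>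

definition gen :: "nat \<Rightarrow> complex \<Rightarrow> complex" where
  "gen t x = (if t = 1 then 1 + g3 x else if t = 3 then g3 x else g2 x)"

definition gfp :: "nat \<Rightarrow> nat \<Rightarrow> complex \<Rightarrow> complex" where
  "gfp t d x = gen t x * Zf x ^ d"

lemma gen_holomorphic: "gen t holomorphic_on g_dom"
  using g2_holomorphic g3_holomorphic
  by (cases "t = 1"; cases "t = 3") (auto intro!: holomorphic_intros simp: gen_def [abs_def])

lemma gfp_holomorphic: "gfp t d holomorphic_on g_dom"
  unfolding gfp_def [abs_def] by (intro holomorphic_intros gen_holomorphic Zf_holomorphic_g_dom)

lemma gfun_eq_gen: "j \<in> {1,2,3,4} \<Longrightarrow> x \<in> g_dom \<Longrightarrow> gfun j x = gen j x"
  using g1_0 by (cases "x = 0") (auto simp: gfun_def gen_def g1_def g1raw_eq g4_eq_g2)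

text \<open>These mirror the recursion of \<open>G(k)\<close> for \<open>B\<close> pointing towards \<open>A\<close> (types 2, 3),
  away from \<open>A\<close> (types 1, 4), and for \<open>B = A\<close>.\<close>

lemma gfp_toward:
  assumes "t \<in> {2,3}" and x: "x \<in> g_dom"
  shows "sqrt2/3 * gfp t d x = x * (-1/3 * gfp (t - 1) d x + 4/(3 * sqrt2) * gfp t (Suc d) x)"
proof -
  have "sqrt2/3 * gfp t d x = (sqrt2/3 * gen t x) * Zf x ^ d"
    by (simp add: gfp_def)
  also have "\<dots> = x * (-1/3 * gen (t - 1) x + 4/(3 * sqrt2) * gen t x * Zf x) * Zf x ^ d"
    using assms g2_equation[OF x] g3_equation[OF x] by (auto simp: gen_def)
  finally show ?thesis
    by (simp add: gfp_def algebra_simps)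
qed

lemma gfp_away:
  assumes "t \<in> {1,2}" and x: "x \<in> g_dom"
  shows "1/3 * gfp t (Suc d) x = x * (1/(3 * sqrt2) * gfp (t + 1) (Suc d) x + 2/3 * gfp t d x)"
proof -
  have "1/3 * gfp t (Suc d) x = gen t x * Zf x / 3 * Zf x ^ d"
    by (simp add: gfp_def)
  also have "\<dots> = x * (gen (t + 1) x * Zf x / (3 * sqrt2) + 2/3 * gen t x) * Zf x ^ d"
    using assms g1_Zf_equation[OF x] g2_Zf_equation[OF x] by (auto simp: gen_def)
  finally show ?thesis
    by (simp add: gfp_def algebra_simps)
qed

lemma gfp_1_0:
  assumes x: "x \<in> g_dom"
  shows "sqrt2/3 * gfp 1 0 x = sqrt2/3 + x * (-1/3 * gfp 2 0 x + 4/(3 * sqrt2) * gfp 3 1 x)"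
proof -
  have "sqrt2/3 * gfp 1 0 x = sqrt2/3 + sqrt2/3 * g3 x"
    by (simp add: gfp_def gen_def algebra_simps)
  also have "\<dots> = sqrt2/3 + x * (- g2 x/3 + 4/(3 * sqrt2) * g3 x * Zf x)"
    by (simp only: g3_equation[OF x])
  finally show ?thesis
    by (simp add: gfp_def gen_def algebra_simps)
qed

section \<open>Taylor coefficients\<close>

lemma higher_deriv_Suc_at_0:
  fixes f h :: "complex \<Rightarrow> complex"
  assumes f: "f holomorphic_on S" and h: "h holomorphic_on S" and S: "open S" "0 \<in> S"
    and eq: "\<And>x. x \<in> S \<Longrightarrow> f x = a + x * h x"
  shows "(deriv ^^ Suc k) f 0 = of_nat (Suc k) * (deriv ^^ k) h 0"
proof -
  have xh: "(\<lambda>x. x * h x) holomorphic_on S" using h by (intro holomorphic_intros)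
  have "(deriv ^^ Suc k) f 0 = (deriv ^^ Suc k) (\<lambda>x. a + x * h x) 0"
    by (rule higher_deriv_cong_ev)
       (use eventually_nhds_in_open[OF S] in \<open>auto elim!: eventually_mono simp: eq\<close>)
  also have "\<dots> = (deriv ^^ Suc k) (\<lambda>x. x * h x) 0"
    using higher_deriv_add[OF _ xh S, of "\<lambda>x. a" "Suc k"] by (simp del: funpow.simps)
  also have "\<dots> = (\<Sum>i = 0..Suc k. of_nat (Suc k choose i) * (deriv ^^ i) (\<lambda>x. x) 0
      * (deriv ^^ (Suc k - i)) h 0)"
    by (rule higher_deriv_mult[OF _ h S]) (intro holomorphic_intros)
  also have "\<dots> = (\<Sum>i\<in>{1}. of_nat (Suc k choose i) * (deriv ^^ i) (\<lambda>x. x) 0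
      * (deriv ^^ (Suc k - i)) h 0)"
    by (rule sum.mono_neutral_right) auto
  finally show ?thesis by simp
qed

lemma higher_deriv_gfp_Suc:
  assumes "\<And>x. x \<in> g_dom \<Longrightarrow> c * gfp t d x = a + x * (\<alpha> * gfp t1 d1 x + \<beta> * gfp t2 d2 x)"
  shows "c * (deriv ^^ Suc k) (gfp t d) 0 =
    of_nat (Suc k) * (\<alpha> * (deriv ^^ k) (gfp t1 d1) 0 + \<beta> * (deriv ^^ k) (gfp t2 d2) 0)"
proof -
  note hol = gfp_holomorphic zero_in_g_dom open_g_dom
  have "c * (deriv ^^ Suc k) (gfp t d) 0 = (deriv ^^ Suc k) (\<lambda>x. c * gfp t d x) 0"
    using higher_deriv_cmult[OF hol] by (simp del: funpow.simps)
  also have "\<dots> = of_nat (Suc k) * (deriv ^^ k) (\<lambda>x. \<alpha> * gfp t1 d1 x + \<beta> * gfp t2 d2 x) 0"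
    by (rule higher_deriv_Suc_at_0[OF _ _ open_g_dom zero_in_g_dom assms])
       (auto intro!: holomorphic_intros gfp_holomorphic)
  also have "(deriv ^^ k) (\<lambda>x. \<alpha> * gfp t1 d1 x + \<beta> * gfp t2 d2 x) 0 =
      (deriv ^^ k) (\<lambda>x. \<alpha> * gfp t1 d1 x) 0 + (deriv ^^ k) (\<lambda>x. \<beta> * gfp t2 d2 x) 0"
    by (rule higher_deriv_add) (auto intro!: holomorphic_intros gfp_holomorphic open_g_dom zero_in_g_dom)
  finally show ?thesis
    using higher_deriv_cmult[OF hol] by (simp del: funpow.simps)
qed

text \<open>\<open>coeff t k d\<close> is the right-hand side of the theorem for type \<open>t\<close>, with \<^const>\<open>gen\<close> in
  place of \<^const>\<open>gfun\<close>.\<close>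

definition coeff :: "nat \<Rightarrow> nat \<Rightarrow> nat \<Rightarrow> complex" where
  "coeff t k d = (sqrt2/3) ^ k * (1/sqrt2) ^ d / fact k * (deriv ^^ k) (gfp t d) 0"

lemma coeff_Suc_eq:
  assumes "c * (deriv ^^ Suc k) (gfp t d) 0 = of_nat (Suc k) * Y" and "c \<noteq> 0"
  shows "coeff t (Suc k) d = sqrt2/3 / c * ((sqrt2/3) ^ k * (1/sqrt2) ^ d / fact k) * Y"
proof -
  have "(deriv ^^ Suc k) (gfp t d) 0 = of_nat (Suc k) * Y / c"
    using assms by (simp add: field_simps del: funpow.simps)
  then show ?thesis
    unfolding coeff_def by (simp add: field_simps del: of_nat_Suc funpow.simps)
qed

lemma coeff_Suc_toward:
  assumes "t \<in> {2,3}"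
  shows "coeff t (Suc k) d = -1/3 * coeff (t - 1) k d + 4/3 * coeff t k (Suc d)"
proof -
  have "sqrt2/3 * (deriv ^^ Suc k) (gfp t d) 0 = of_nat (Suc k) *
      (-1/3 * (deriv ^^ k) (gfp (t - 1) d) 0 + 4/(3 * sqrt2) * (deriv ^^ k) (gfp t (Suc d)) 0)"
    by (rule higher_deriv_gfp_Suc[where a = 0]) (simp only: gfp_toward[OF assms] add_0_left)
  from coeff_Suc_eq[OF this] show ?thesis
    using sqrt2_neq_0 by (simp add: coeff_def field_simps)
qed

lemma coeff_Suc_away:
  assumes "t \<in> {1,2}"
  shows "coeff t (Suc k) (Suc d) = 1/3 * coeff (t + 1) k (Suc d) + 2/3 * coeff t k d"
proof -
  have "1/3 * (deriv ^^ Suc k) (gfp t (Suc d)) 0 = of_nat (Suc k) *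
      (1/(3 * sqrt2) * (deriv ^^ k) (gfp (t + 1) (Suc d)) 0 + 2/3 * (deriv ^^ k) (gfp t d) 0)"
    by (rule higher_deriv_gfp_Suc[where a = 0]) (simp only: gfp_away[OF assms] add_0_left)
  from coeff_Suc_eq[OF this] show ?thesis
    using sqrt2_neq_0 by (simp add: coeff_def field_simps)
qed

lemma coeff_1_Suc_0: "coeff 1 (Suc k) 0 = -1/3 * coeff 2 k 0 + 4/3 * coeff 3 k 1"
proof -
  have "sqrt2/3 * (deriv ^^ Suc k) (gfp 1 0) 0 = of_nat (Suc k) *
      (-1/3 * (deriv ^^ k) (gfp 2 0) 0 + 4/(3 * sqrt2) * (deriv ^^ k) (gfp 3 1) 0)"
    by (rule higher_deriv_gfp_Suc[where a = "sqrt2/3"]) (rule gfp_1_0)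
  from coeff_Suc_eq[OF this] show ?thesis
    using sqrt2_neq_0 by (simp add: coeff_def field_simps)
qed

lemma coeff_4: "coeff 4 k d = coeff 2 k d"
proof -
  have "gfp 4 = gfp 2" by (simp add: gfp_def [abs_def] gen_def)
  then show ?thesis by (simp add: coeff_def)
qed

lemma coeff_0: "coeff 1 0 0 = 1" "coeff 2 0 0 = 0" "coeff t 0 (Suc d) = 0"
  by (simp_all add: coeff_def gfp_def gen_def)

section \<open>Solving the recursion\<close>

text \<open>Since every pair of edges is equal, opposite, or in some \<^const>\<open>edge_config\<close>, this
  determines \<open>G(k)\<close> completely.\<close>

definition Gk_closed_form :: "nat \<Rightarrow> bool" where
  "Gk_closed_form k \<longleftrightarrow> (\<forall>A\<in>oedges.
     complex_of_real (Gk k A A) = coeff 1 k 0 \<and> complex_of_real (Gk k (orev A) A) = coeff 2 k 0 \<and>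
     (\<forall>B\<in>oedges. \<forall>i j m. edge_config A B i j m \<longrightarrow>
        complex_of_real (Gk k B A) = coeff (config_type i j) k (Suc m)))"

lemma Gk_closed_form_0: "Gk_closed_form 0"
proof -
  have "B \<noteq> A" if "A \<in> oedges" "B \<in> oedges" "edge_config A B i j m" for A B i j m
    using edge_config_not_same_edge[OF that] by (auto simp: same_edge_def)
  then show ?thesis
    unfolding Gk_closed_form_def using orev_neq coeff_0 by (simp add: One_nat_def)
qed

context
  fixes k :: nat and A :: "nat list \<times> nat list"
  assumes IH: "Gk_closed_form k" and A: "A \<in> oedges"
begin

lemma Gk_closed_formD:
  shows "complex_of_real (Gk k A A) = coeff 1 k 0"
    and "complex_of_real (Gk k (orev A) A) = coeff 2 k 0"
    and "B \<in> oedges \<Longrightarrow> edge_config A B i j m \<Longrightarrow>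
      complex_of_real (Gk k B A) = coeff (config_type i j) k (Suc m)"
  using IH A unfolding Gk_closed_form_def by blast+

lemma Gk_Suc_diag: "complex_of_real (Gk (Suc k) A A) = coeff 1 (Suc k) 0"
proof -
  obtain w1 w2 where w: "w1 \<noteq> w2" "w1 \<noteq> snd A" "w2 \<noteq> snd A"
      "{w. badj (fst A) w} = {snd A, w1, w2}"
    and step: "Gk (Suc k) A A = -1/3 * Gk k (orev A) A + 2/3 * Gk k (w1, fst A) A + 2/3 * Gk k (w2, fst A) A"
    using Gk_Suc_eq[OF A] by metis
  have "complex_of_real (Gk k (w, fst A) A) = coeff 3 k 1" if "w \<in> {w1, w2}" for w
    using Gk_closed_formD(3)[OF badj_in_oedges edge_config_from_fst[OF A]] that w
    by (auto simp: config_type_def)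
  then show ?thesis
    using step Gk_closed_formD(2) coeff_1_Suc_0 by simp
qed

lemma Gk_Suc_orev: "complex_of_real (Gk (Suc k) (orev A) A) = coeff 2 (Suc k) 0"
proof -
  have B: "orev A \<in> oedges" "fst (orev A) = snd A" "snd (orev A) = fst A" "orev (orev A) = A"
    using orev_in_oedges[OF A] by (auto simp: orev_def)
  obtain w1 w2 where w: "w1 \<noteq> w2" "w1 \<noteq> fst A" "w2 \<noteq> fst A"
      "{w. badj (snd A) w} = {fst A, w1, w2}"
    and step: "Gk (Suc k) (orev A) A = -1/3 * Gk k A A + 2/3 * Gk k (w1, snd A) A + 2/3 * Gk k (w2, snd A) A"
    using Gk_Suc_eq[OF B(1)] unfolding B(2-4) by metis
  have "complex_of_real (Gk k (w, snd A) A) = coeff 2 k 1" if "w \<in> {w1, w2}" for w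
    using Gk_closed_formD(3)[OF badj_in_oedges edge_config_from_snd[OF A]] that w
    by (auto simp: config_type_def)
  then show ?thesis
    using step Gk_closed_formD(1) coeff_Suc_toward[of 2 k 0] by simp
qed

lemma Gk_Suc_config_toward:
  assumes B: "B \<in> oedges" and conf: "edge_config A B i True m"
  shows "complex_of_real (Gk (Suc k) B A) = coeff (config_type i True) (Suc k) (Suc m)"
proof -
  obtain w1 w2 where w: "w1 \<noteq> w2" "w1 \<noteq> snd B" "w2 \<noteq> snd B"
      "{w. badj (fst B) w} = {snd B, w1, w2}"
    and step: "Gk (Suc k) B A = -1/3 * Gk k (orev B) A + 2/3 * Gk k (w1, fst B) A + 2/3 * Gk k (w2, fst B) A"
    using Gk_Suc_eq[OF B] by metis
  have "complex_of_real (Gk k (orev B) A) = coeff (config_type i False) k (Suc m)"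
    using Gk_closed_formD(3)[OF orev_in_oedges[OF B] edge_config_orev[OF conf]] by simp
  moreover have "complex_of_real (Gk k (w, fst B) A) = coeff (config_type i True) k (Suc (Suc m))"
    if "w \<in> {w1, w2}" for w
    using Gk_closed_formD(3)[OF badj_in_oedges edge_config_step_away[OF B conf]] that w by auto
  ultimately show ?thesis
    using step coeff_Suc_toward[of "config_type i True"] coeff_4
    by (cases i) (simp_all add: config_type_def)
qed

lemma Gk_Suc_config_away:
  assumes B: "B \<in> oedges" and conf: "edge_config A B i False m"
  shows "complex_of_real (Gk (Suc k) B A) = coeff (config_type i False) (Suc k) (Suc m)"
proof -
  obtain w1 w2 where w: "w1 \<noteq> w2" "w1 \<noteq> snd B" "w2 \<noteq> snd B"
      "{w. badj (fst B) w} = {snd B, w1, w2}"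
    and step: "Gk (Suc k) B A = -1/3 * Gk k (orev B) A + 2/3 * Gk k (w1, fst B) A + 2/3 * Gk k (w2, fst B) A"
    using Gk_Suc_eq[OF B] by metis
  obtain t where t: "badj (fst B) t" "t \<noteq> snd B"
    "m = 0 \<Longrightarrow> (t, fst B) = (if i then A else orev A)"
    "m \<noteq> 0 \<Longrightarrow> edge_config A (t, fst B) i False (m - 1)"
    "\<And>w. badj (fst B) w \<Longrightarrow> w \<noteq> t \<Longrightarrow> edge_config A (w, fst B) i True m"
    using edge_config_step_toward[OF A B conf] by metis
  have near: "complex_of_real (Gk k (t, fst B) A) = coeff (config_type i False) k m"
  proof (cases "m = 0")
    case True
    then show ?thesis
      using t(3) Gk_closed_formD(1,2) coeff_4 by (cases i) (auto simp: config_type_def)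
  next
    case False
    then show ?thesis
      using Gk_closed_formD(3)[OF badj_in_oedges[OF t(1)] t(4)] by simp
  qed
  have far: "complex_of_real (Gk k (w, fst B) A) = coeff (config_type i True) k (Suc m)"
    if "badj (fst B) w" "w \<noteq> t" for w
    using Gk_closed_formD(3)[OF badj_in_oedges t(5)] that by simp
  have "complex_of_real (Gk k (orev B) A) = coeff (config_type i True) k (Suc m)"
    using Gk_closed_formD(3)[OF orev_in_oedges[OF B] edge_config_orev[OF conf]] by simp
  moreover obtain u where u: "badj (fst B) u" "u \<noteq> t"
    and sum: "Gk k (w1, fst B) A + Gk k (w2, fst B) A = Gk k (t, fst B) A + Gk k (u, fst B) A"
  proof (cases "t = w1")
    case True
    then show ?thesis using that[of w2] w by auto
  next
    case False
    then have "t = w2" using t(1,2) w(4) by blast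
    then show ?thesis using that[of w1] w by auto
  qed
  moreover have "Gk (Suc k) B A = -1/3 * Gk k (orev B) A + 2/3 * Gk k (t, fst B) A + 2/3 * Gk k (u, fst B) A"
    using step sum by linarith
  ultimately have Gk_Suc: "complex_of_real (Gk (Suc k) B A) =
      1/3 * coeff (config_type i True) k (Suc m) + 2/3 * coeff (config_type i False) k m"
    using near far[OF u] by simp
  show ?thesis
  proof (cases i)
    case True
    then show ?thesis
      using Gk_Suc coeff_Suc_away[of 1 k m] by (simp add: config_type_def numeral_2_eq_2)
  next
    case False
    then show ?thesis
      using Gk_Suc coeff_Suc_away[of 2 k m] coeff_4 by (simp add: config_type_def)
  qed
qed

end

lemma Gk_closed_form: "Gk_closed_form k"
proof (induction k)
  case 0
  show ?case by (rule Gk_closed_form_0)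
next
  case (Suc k)
  show ?case
    unfolding Gk_closed_form_def
  proof (intro ballI conjI allI impI)
    fix A B i j m
    assume A: "A \<in> oedges" and B: "B \<in> oedges" and conf: "edge_config A B i j m"
    show "complex_of_real (Gk (Suc k) B A) = coeff (config_type i j) (Suc k) (Suc m)"
      using Gk_Suc_config_toward[OF Suc A B] Gk_Suc_config_away[OF Suc A B] conf by (cases j) auto
  qed (use Gk_Suc_diag[OF Suc] Gk_Suc_orev[OF Suc] in auto)
qed

lemma coeff_3_Suc_0: "coeff 3 (Suc k) 0 = coeff 1 (Suc k) 0"
  using coeff_Suc_toward[of 3 k 0] coeff_1_Suc_0[of k] by simp

lemma Gk_eq_coeff:
  assumes "k \<ge> 1" and "j \<in> {1,2,3,4}" and A: "A \<in> oedges" and B: "B \<in> oedges"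
    and type: "pair_type j A B"
  shows "complex_of_real (Gk k B A) = coeff j k (middist A B)"
proof (cases "same_edge A B")
  case True
  then have "middist A B = 0" by (simp add: middist_def)
  moreover have "coeff 3 k 0 = coeff 1 k 0"
    using assms(1) coeff_3_Suc_0 by (cases k) auto
  ultimately show ?thesis
    using type Gk_closed_formD(1,2)[OF Gk_closed_form A] coeff_4
    by (auto simp: pair_type_middist_0)
next
  case False
  then obtain i j' m where conf: "edge_config A B i j' m"
    using edge_config_exists[OF A B] by blast
  then show ?thesis
    using Gk_closed_formD(3)[OF Gk_closed_form A B conf] type
      middist_pair_type_edge_config[OF A B conf] by simp
qed

lemma coeff_eq_gfun:
  assumes "j \<in> {1,2,3,4}"
  shows "complex_of_real (rr ^ k * (1 / sqrt 2) ^ d / fact k) * (deriv ^^ k) (\<lambda>x. gfun j x * Zf x ^ d) 0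
    = coeff j k d"
proof -
  have "\<forall>\<^sub>F x in nhds 0. gfun j x * Zf x ^ d = gfp j d x"
    using eventually_nhds_in_open[OF open_g_dom zero_in_g_dom]
    by eventually_elim (simp add: gfp_def gfun_eq_gen[OF assms])
  then have "(deriv ^^ k) (\<lambda>x. gfun j x * Zf x ^ d) 0 = (deriv ^^ k) (gfp j d) 0"
    by (rule higher_deriv_cong_ev) simp
  moreover have "complex_of_real (rr ^ k * (1 / sqrt 2) ^ d / fact k) = (sqrt2/3) ^ k * (1/sqrt2) ^ d / fact k"
    by (simp add: rr_def sqrt2_def)
  ultimately show ?thesis by (simp add: coeff_def)
qed

theorem proposition1:
  fixes k d j :: nat and A B :: "nat list \<times> nat list"
  assumes "k \<ge> 1" and "j \<in> {1,2,3,4}"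
    and "A \<in> oedges" and "B \<in> oedges"
    and "middist A B = d" and "pair_type j A B"
  shows "complex_of_real (Gk k B A) =
    complex_of_real (rr ^ k * (1 / sqrt 2) ^ d / fact k)
      * (deriv ^^ k) (\<lambda>x. gfun j x * Zf x ^ d) 0"
  using Gk_eq_coeff[OF assms(1-4,6)] coeff_eq_gfun[OF assms(2)] assms(5) by simp

end
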